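(* Let $f:[0,\infty)\to\mathbb{R}$ be convex with $f(1)=0$ and let $G$ be increasing and convex with $G(0)=0$. Let $\mathcal{M}$ be a finite set with $|\mathcal{M}|\ge2$, and let $p_{M\hat M}$ be a joint distribution on $\mathcal{M}\times\mathcal{M}$ whose $M$-marginal is uniform and with $p_{M\hat M}(M\ne\hat M)=\epsilon$. Then under $p_{M\hat M}$, $$I_{G,f}(M;\hat M)\ge G\!\left(\frac{1}{|\mathcal{M}|}f\big(|\mathcal{M}|(1-\epsilon)\big)+\frac{|\mathcal{M}|-1}{|\mathcal{M}|}f\!\left(\frac{|\mathcal{M}|\epsilon}{|\mathcal{M}|-1}\right)\right).$$
   Context: $D_f(p\|q)=\sum_y q(y) f(p(y)/q(y))$ with $0f(0/0)=0$. $I_{G,f}(M;\hat M)=\min_{q_{\hat M}}\sum_m p_M(m)\,G(D_f(p_{\hat M|M=m}\|q_{\hat M}))$. *)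

theory Defs
  imports "HOL-Analysis.Analysis"
begin

text \<open>Asymptotic slope of f, used for the convention q f(p/q) = p * lim_{t->oo} f(t)/t when q = 0 < p.\<close>
definition f_slope_inf :: "(real \<Rightarrow> real) \<Rightarrow> ereal" where
  "f_slope_inf f = Lim at_top (\<lambda>t. ereal (f t / t))"

definition fdiv_term :: "(real \<Rightarrow> real) \<Rightarrow> real \<Rightarrow> real \<Rightarrow> ereal" where
  "fdiv_term f a b =
     (if b > 0 then ereal (b * f (a / b))
      else if a = 0 then 0
      else ereal a * f_slope_inf f)"

definition f_div :: "(real \<Rightarrow> real) \<Rightarrow> ('a::finite \<Rightarrow> real) \<Rightarrow> ('a \<Rightarrow> real) \<Rightarrow> ereal" where
  "f_div f p q = (\<Sum>y\<in>UNIV. fdiv_term f (p y) (q y))"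

text \<open>G extended to [0,oo] by its supremum (limit at oo, G being increasing).\<close>
definition G_ext :: "(real \<Rightarrow> real) \<Rightarrow> ereal \<Rightarrow> ereal" where
  "G_ext G x = (if x = \<infinity> then (SUP r\<in>{0..}. ereal (G r)) else ereal (G (real_of_ereal x)))"

definition prob_dists :: "('a::finite \<Rightarrow> real) set" where
  "prob_dists = {q. (\<forall>y. 0 \<le> q y) \<and> (\<Sum>y\<in>UNIV. q y) = 1}"

text \<open>Joint distribution p m mh = p_{M Mhat}(m, mh); marginal and conditional.\<close>
definition marg1 :: "('a::finite \<Rightarrow> 'b::finite \<Rightarrow> real) \<Rightarrow> 'a \<Rightarrow> real" where
  "marg1 p m = (\<Sum>y\<in>UNIV. p m y)"

definition cond_dist :: "('a::finite \<Rightarrow> 'b::finite \<Rightarrow> real) \<Rightarrow> 'a \<Rightarrow> 'b \<Rightarrow> real" where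
  "cond_dist p m y = p m y / marg1 p m"

definition I_Gf :: "(real \<Rightarrow> real) \<Rightarrow> (real \<Rightarrow> real) \<Rightarrow> ('a::finite \<Rightarrow> 'b::finite \<Rightarrow> real) \<Rightarrow> ereal" where
  "I_Gf G f p = (INF q\<in>prob_dists. \<Sum>m\<in>UNIV. ereal (marg1 p m) * G_ext G (f_div f (cond_dist p m) q))"

end

theory Submission
  imports Defs
begin

text \<open>
  The summand \<open>q f(p/q)\<close> of \<open>D\<^sub>f\<close> is the perspective of \<open>f\<close>, extended to \<open>q = 0\<close> by the
  asymptotic slope \<open>f'(\<infinity>)\<close>; it is positively homogeneous and subadditive on \<open>[0,\<infinity>)\<^sup>2\<close>,
  so merging outcomes can only decrease it. Written as one sum of perspectives over the pairs
  \<open>(m, m')\<close>, the average \<open>\<Sum>\<^sub>m p\<^sub>M(m) D\<^sub>f(p\<^bsub>M'|M=m\<^esub> \<parallel> q)\<close> therefore dominates the binary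
  divergence between the events \<open>M' = M\<close> and \<open>M' \<noteq> M\<close>, whose probabilities are \<open>1 - \<epsilon>, \<epsilon>\<close>
  under \<open>p\<close> and \<open>1/|M|, (|M| - 1)/|M|\<close> under \<open>p\<^sub>M \<otimes> q\<close>; this is the argument of \<open>G\<close> on the
  right-hand side. Monotonicity and Jensen's inequality for \<open>G\<close> finish the proof for every \<open>q\<close>;
  an infinite divergence is handled by \<open>G(\<beta>) \<le> w G(\<beta>/w)\<close>, a consequence of convexity and \<open>G(0) = 0\<close>.
\<close>

lemma tendsto_at_top_SUP_mono_on:
  fixes g :: "real \<Rightarrow> 'a::{complete_linorder,linorder_topology}"
  assumes mono: "mono_on {a<..} g"
  shows "(g \<longlongrightarrow> (SUP t\<in>{a<..}. g t)) at_top"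
proof (rule order_tendstoI)
  fix c assume "c < (SUP t\<in>{a<..}. g t)"
  then obtain t0 where t0: "a < t0" "c < g t0"
    by (auto simp: less_SUP_iff)
  show "\<forall>\<^sub>F t in at_top. c < g t"
    using eventually_ge_at_top[of t0]
    by eventually_elim (use t0 in \<open>auto intro: order_less_le_trans mono_onD[OF mono]\<close>)
next
  fix c assume less: "(SUP t\<in>{a<..}. g t) < c"
  show "\<forall>\<^sub>F t in at_top. g t < c"
    using eventually_gt_at_top[of a]
  proof eventually_elim
    case (elim t)
    then have "g t \<le> (SUP t\<in>{a<..}. g t)" by (intro SUP_upper) simp
    with less show ?case by order
  qed
qed

lemma convex_on_chord_slope_mono:
  fixes f :: "real \<Rightarrow> real"
  assumes f: "convex_on {0..} f" and "0 \<le> x" "x < s" "s \<le> t"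
  shows "(f s - f x) / (s - x) \<le> (f t - f x) / (t - x)"
proof (cases "s = t")
  case False
  have swap: "(f x - f u) / (x - u) = (f u - f x) / (u - x)" for u
    by (metis minus_diff_eq minus_divide_divide)
  show ?thesis
    using convex_on_slope_le(1)[OF f, of x t s] assms False by (simp add: swap)
qed simp

lemma tendsto_f_slope_inf:
  fixes f :: "real \<Rightarrow> real"
  assumes f: "convex_on {0..} f"
  shows "((\<lambda>t. ereal (f t / t)) \<longlongrightarrow> f_slope_inf f) at_top"
proof -
  define S where "S = (SUP t\<in>{0<..}. ereal ((f t - f 0) / t))"
  have "mono_on {0<..} (\<lambda>t. ereal ((f t - f 0) / t))"
  proof (rule mono_onI)
    fix s t :: real assume "s \<in> {0<..}" "t \<in> {0<..}" "s \<le> t"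
    then show "ereal ((f s - f 0) / s) \<le> ereal ((f t - f 0) / t)"
      using convex_on_chord_slope_mono[OF f, of 0 s t] by simp
  qed
  then have chords: "((\<lambda>t. ereal ((f t - f 0) / t)) \<longlongrightarrow> S) at_top"
    unfolding S_def by (rule tendsto_at_top_SUP_mono_on)
  have vanish: "((\<lambda>t. ereal (f 0 / t)) \<longlongrightarrow> 0) at_top"
    by (simp add: zero_ereal_def tendsto_divide_0[OF tendsto_const filterlim_at_top_imp_at_infinity[OF filterlim_ident]])
  have "((\<lambda>t. ereal ((f t - f 0) / t) + ereal (f 0 / t)) \<longlongrightarrow> S + 0) at_top"
    by (rule tendsto_add_ereal_general1[OF _ chords vanish]) simp
  moreover have "(\<lambda>t. ereal ((f t - f 0) / t) + ereal (f 0 / t)) = (\<lambda>t. ereal (f t / t))"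
    by (simp add: fun_eq_iff diff_divide_distrib)
  ultimately have lim: "((\<lambda>t. ereal (f t / t)) \<longlongrightarrow> S) at_top"
    by simp
  then have "f_slope_inf f = S"
    unfolding f_slope_inf_def by (intro tendsto_Lim) auto
  with lim show ?thesis by simp
qed

lemma chord_slope_le_f_slope_inf:
  fixes f :: "real \<Rightarrow> real"
  assumes f: "convex_on {0..} f" and "0 \<le> x" "x < y"
  shows "ereal ((f y - f x) / (y - x)) \<le> f_slope_inf f"
proof -
  define c where "c = (f y - f x) / (y - x)"
  have lim: "((\<lambda>t. ereal (c + (f x - c * x) / t)) \<longlongrightarrow> ereal (c + 0)) at_top"
    by (intro tendsto_ereal tendsto_add tendsto_const tendsto_divide_0[OF tendsto_const]
        filterlim_at_top_imp_at_infinity[OF filterlim_ident])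
  have "\<forall>\<^sub>F t in at_top. ereal (c + (f x - c * x) / t) \<le> ereal (f t / t)"
    using eventually_gt_at_top[of y]
  proof eventually_elim
    case (elim t)
    have "c \<le> (f t - f x) / (t - x)"
      unfolding c_def using convex_on_chord_slope_mono[OF f, of x y t] assms elim by simp
    moreover have t: "0 < t" "0 < t - x"
      using assms elim by auto
    ultimately have "f x + c * (t - x) \<le> f t"
      by (simp add: pos_le_divide_eq)
    moreover have "c + (f x - c * x) / t = (f x + c * (t - x)) / t"
      using t by (simp add: field_simps)
    ultimately show ?case
      using t by (simp add: divide_right_mono)
  qed
  from tendsto_le[OF trivial_limit_at_top_linorder tendsto_f_slope_inf[OF f] lim this]
  show ?thesis by (simp add: c_def)
qed

lemma fdiv_term_pos [simp]: "0 < b \<Longrightarrow> fdiv_term f a b = ereal (b * f (a / b))"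
  by (simp add: fdiv_term_def)

lemma fdiv_term_zero_right: "0 \<le> a \<Longrightarrow> fdiv_term f a 0 = ereal a * f_slope_inf f"
  by (auto simp: fdiv_term_def)

lemma fdiv_term_mult:
  assumes "0 \<le> c" "0 \<le> a" "0 \<le> b"
  shows "fdiv_term f (c * a) (c * b) = ereal c * fdiv_term f a b"
proof -
  consider "c = 0" | "0 < c" "0 < b" | "0 < c" "b = 0"
    using assms by fastforce
  then show ?thesis
  proof cases
    case 3
    then show ?thesis
      using assms by (simp add: fdiv_term_zero_right mult.assoc flip: times_ereal.simps(1))
  qed (auto simp: fdiv_term_def)
qed

lemma convex_on_perspective_add_le:
  fixes f :: "real \<Rightarrow> real"
  assumes f: "convex_on {0..} f" and "0 \<le> a1" "0 \<le> a2" "0 < b1" "0 < b2"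
  shows "(b1 + b2) * f ((a1 + a2) / (b1 + b2)) \<le> b1 * f (a1 / b1) + b2 * f (a2 / b2)"
proof -
  define l where "l = b2 / (b1 + b2)"
  have l: "0 \<le> l" "l \<le> 1" "1 - l = b1 / (b1 + b2)"
    using assms by (auto simp: l_def field_simps)
  have "(1 - l) * (a1 / b1) = a1 / (b1 + b2)" "l * (a2 / b2) = a2 / (b1 + b2)"
    using assms l(3) by (simp_all add: l_def)
  then have "(1 - l) *\<^sub>R (a1 / b1) + l *\<^sub>R (a2 / b2) = (a1 + a2) / (b1 + b2)"
    by (simp add: add_divide_distrib)
  then have "f ((a1 + a2) / (b1 + b2)) \<le> (1 - l) * f (a1 / b1) + l * f (a2 / b2)"
    using convex_onD[OF f, of l "a1 / b1" "a2 / b2"] assms l by simp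
  then have "(b1 + b2) * f ((a1 + a2) / (b1 + b2))
      \<le> (b1 + b2) * ((1 - l) * f (a1 / b1) + l * f (a2 / b2))"
    using assms by (simp add: mult_left_mono)
  also have "\<dots> = b1 * f (a1 / b1) + b2 * f (a2 / b2)"
    using assms unfolding l(3) by (simp add: l_def distrib_left)
  finally show ?thesis .
qed

lemma fdiv_term_add_zero_right_le:
  fixes f :: "real \<Rightarrow> real"
  assumes f: "convex_on {0..} f" and "0 \<le> a1" "0 \<le> a2" "0 < b"
  shows "fdiv_term f (a1 + a2) b \<le> fdiv_term f a1 b + fdiv_term f a2 0"
proof (cases "a2 = 0")
  case False
  define x y where "x = a1 / b" and "y = (a1 + a2) / b"
  have xy: "0 \<le> x" "x < y" "a2 = b * (y - x)"
    using assms False by (auto simp: x_def y_def field_simps)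
  have "a2 * ((f y - f x) / (y - x)) = b * f y - b * f x"
    using xy unfolding xy(3) by (simp add: field_simps)
  then have "ereal (b * f y) = ereal (b * f x) + ereal a2 * ereal ((f y - f x) / (y - x))"
    by simp
  also have "\<dots> \<le> ereal (b * f x) + ereal a2 * f_slope_inf f"
    using chord_slope_le_f_slope_inf[OF f xy(1,2)] assms
    by (intro add_left_mono ereal_mult_left_mono) auto
  finally have "ereal (b * f y) \<le> ereal (b * f x) + ereal a2 * f_slope_inf f" .
  then show ?thesis
    using assms by (simp add: x_def y_def fdiv_term_zero_right)
qed (simp add: fdiv_term_def)

lemma fdiv_term_add_le:
  fixes f :: "real \<Rightarrow> real"
  assumes f: "convex_on {0..} f" and "0 \<le> a1" "0 \<le> a2" "0 \<le> b1" "0 \<le> b2"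
  shows "fdiv_term f (a1 + a2) (b1 + b2) \<le> fdiv_term f a1 b1 + fdiv_term f a2 b2"
proof -
  consider "0 < b1" "0 < b2" | "0 < b1" "b2 = 0" | "b1 = 0" "0 < b2" | "b1 = 0" "b2 = 0"
    using assms by fastforce
  then show ?thesis
  proof cases
    case 1
    then show ?thesis
      using convex_on_perspective_add_le[OF f] assms by simp
  next
    case 2
    then show ?thesis
      using fdiv_term_add_zero_right_le[OF f] assms by simp
  next
    case 3
    then show ?thesis
      using fdiv_term_add_zero_right_le[OF f, of a2 a1 b2] assms by (simp add: add.commute)
  next
    case 4
    then show ?thesis
      using assms by (simp add: fdiv_term_zero_right ereal_left_distrib flip: plus_ereal.simps)
  qed
qed

lemma fdiv_term_sum_le:
  fixes f :: "real \<Rightarrow> real"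
  assumes f: "convex_on {0..} f" and "finite I"
    and "\<And>i. i \<in> I \<Longrightarrow> 0 \<le> a i" "\<And>i. i \<in> I \<Longrightarrow> 0 \<le> b i"
  shows "fdiv_term f (\<Sum>i\<in>I. a i) (\<Sum>i\<in>I. b i) \<le> (\<Sum>i\<in>I. fdiv_term f (a i) (b i))"
  using assms(2-)
proof (induction I rule: finite_induct)
  case empty
  then show ?case by (simp add: fdiv_term_def)
next
  case (insert j I)
  have "fdiv_term f (\<Sum>i\<in>insert j I. a i) (\<Sum>i\<in>insert j I. b i)
      \<le> fdiv_term f (a j) (b j) + fdiv_term f (\<Sum>i\<in>I. a i) (\<Sum>i\<in>I. b i)"
    using insert by (simp add: fdiv_term_add_le[OF f] sum_nonneg)
  also have "\<dots> \<le> (\<Sum>i\<in>insert j I. fdiv_term f (a i) (b i))"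
    using insert by (simp add: add_left_mono)
  finally show ?case .
qed

lemma fdiv_term_partition_le:
  fixes f :: "real \<Rightarrow> real"
  assumes f: "convex_on {0..} f" and "finite S" "A \<subseteq> S"
    and "\<And>i. i \<in> S \<Longrightarrow> 0 \<le> a i" "\<And>i. i \<in> S \<Longrightarrow> 0 \<le> b i"
  shows "fdiv_term f (\<Sum>i\<in>A. a i) (\<Sum>i\<in>A. b i) + fdiv_term f (\<Sum>i\<in>S - A. a i) (\<Sum>i\<in>S - A. b i)
    \<le> (\<Sum>i\<in>S. fdiv_term f (a i) (b i))"
proof -
  have "finite A"
    using assms finite_subset by blast
  then have "fdiv_term f (\<Sum>i\<in>A. a i) (\<Sum>i\<in>A. b i) + fdiv_term f (\<Sum>i\<in>S - A. a i) (\<Sum>i\<in>S - A. b i)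
      \<le> (\<Sum>i\<in>A. fdiv_term f (a i) (b i)) + (\<Sum>i\<in>S - A. fdiv_term f (a i) (b i))"
    using assms by (intro add_mono fdiv_term_sum_le[OF f]) auto
  also have "\<dots> = (\<Sum>i\<in>S. fdiv_term f (a i) (b i))"
    using assms by (simp add: sum.subset_diff[of A S] add.commute)
  finally show ?thesis .
qed

lemma cond_dist_in_prob_dists:
  assumes "\<And>y. 0 \<le> p m y" and "0 < marg1 p m"
  shows "cond_dist p m \<in> prob_dists"
  using assms by (simp add: prob_dists_def cond_dist_def marg1_def flip: sum_divide_distrib)

lemma f_div_nonneg:
  fixes f :: "real \<Rightarrow> real"
  assumes f: "convex_on {0..} f" and "f 1 = 0" and "p \<in> prob_dists" "q \<in> prob_dists"
  shows "0 \<le> f_div f p q"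
proof -
  have "fdiv_term f (\<Sum>y\<in>UNIV. p y) (\<Sum>y\<in>UNIV. q y) \<le> f_div f p q"
    unfolding f_div_def using assms by (intro fdiv_term_sum_le[OF f]) (auto simp: prob_dists_def)
  then show ?thesis
    using assms by (simp add: prob_dists_def zero_ereal_def)
qed

lemma marg1_mult_f_div_cond_dist:
  assumes p: "\<And>y. 0 \<le> p m y" and q: "\<And>y. 0 \<le> q y"
  shows "ereal (marg1 p m) * f_div f (cond_dist p m) q
    = (\<Sum>y\<in>UNIV. fdiv_term f (p m y) (marg1 p m * q y))"
proof -
  have "marg1 p m * cond_dist p m y = p m y" for y
  proof (cases "marg1 p m = 0")
    case True
    then show ?thesis
      using p by (simp add: marg1_def sum_nonneg_eq_0_iff)
  qed (simp add: cond_dist_def)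
  moreover have w: "0 \<le> marg1 p m" and "0 \<le> cond_dist p m y" for y
    using p by (simp_all add: marg1_def cond_dist_def sum_nonneg)
  ultimately show ?thesis
    unfolding f_div_def mult.commute[of "ereal (marg1 p m)"] sum_distrib_right_ereal[OF w] using q
    by (simp add: mult.commute flip: fdiv_term_mult)
qed

lemma fdiv_term_error_event_le:
  fixes f :: "real \<Rightarrow> real" and p :: "'a::finite \<Rightarrow> 'a \<Rightarrow> real"
  assumes f: "convex_on {0..} f" and p: "\<And>m y. 0 \<le> p m y" and q: "\<And>y. 0 \<le> q y"
  shows "fdiv_term f (\<Sum>m\<in>UNIV. p m m) (\<Sum>m\<in>UNIV. marg1 p m * q m)
      + fdiv_term f (\<Sum>m\<in>UNIV. \<Sum>y\<in>UNIV - {m}. p m y) (\<Sum>m\<in>UNIV. \<Sum>y\<in>UNIV - {m}. marg1 p m * q y)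
    \<le> (\<Sum>m\<in>UNIV. ereal (marg1 p m) * f_div f (cond_dist p m) q)"
proof -
  have w: "0 \<le> marg1 p m" for m
    using p by (simp add: marg1_def sum_nonneg)
  have row: "fdiv_term f (p m m) (marg1 p m * q m)
      + fdiv_term f (\<Sum>y\<in>UNIV - {m}. p m y) (\<Sum>y\<in>UNIV - {m}. marg1 p m * q y)
    \<le> ereal (marg1 p m) * f_div f (cond_dist p m) q" for m
    using fdiv_term_partition_le[OF f, of UNIV "{m}" "p m" "\<lambda>y. marg1 p m * q y"] p q w
    by (simp add: marg1_mult_f_div_cond_dist)
  have "fdiv_term f (\<Sum>m\<in>UNIV. p m m) (\<Sum>m\<in>UNIV. marg1 p m * q m)
      + fdiv_term f (\<Sum>m\<in>UNIV. \<Sum>y\<in>UNIV - {m}. p m y) (\<Sum>m\<in>UNIV. \<Sum>y\<in>UNIV - {m}. marg1 p m * q y)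
    \<le> (\<Sum>m\<in>UNIV. fdiv_term f (p m m) (marg1 p m * q m))
      + (\<Sum>m\<in>UNIV. fdiv_term f (\<Sum>y\<in>UNIV - {m}. p m y) (\<Sum>y\<in>UNIV - {m}. marg1 p m * q y))"
    using p q w by (intro add_mono fdiv_term_sum_le[OF f]) (auto intro: sum_nonneg)
  also have "\<dots> \<le> (\<Sum>m\<in>UNIV. ereal (marg1 p m) * f_div f (cond_dist p m) q)"
    unfolding sum.distrib[symmetric] by (intro sum_mono row)
  finally show ?thesis .
qed

lemma convex_on_mult_le:
  fixes G :: "real \<Rightarrow> real"
  assumes G: "convex_on {0..} G" and "G 0 = 0" "0 \<le> x" "0 \<le> w" "w \<le> 1"
  shows "G (w * x) \<le> w * G x"
  using convex_onD[OF G, of w 0 x] assms by simp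

lemma G_ext_ereal [simp]: "G_ext G (ereal r) = ereal (G r)"
  by (simp add: G_ext_def)

lemma G_le_G_ext_infinity: "0 \<le> r \<Longrightarrow> ereal (G r) \<le> G_ext G \<infinity>"
  by (auto simp: G_ext_def intro: SUP_upper)

lemma G_ext_nonneg:
  assumes G: "mono_on {0..} G" and "G 0 = 0" and "0 \<le> x"
  shows "0 \<le> G_ext G x"
proof (cases x)
  case (real r)
  then show ?thesis
    using assms mono_onD[OF G, of 0 r] by simp
next
  case PInf
  then show ?thesis
    using G_le_G_ext_infinity[of 0 G] assms by (simp add: zero_ereal_def)
qed (use assms in simp)

lemma G_le_sum_G_ext:
  fixes G :: "real \<Rightarrow> real" and D :: "'i \<Rightarrow> ereal"
  assumes G_mono: "mono_on {0..} G" and G_convex: "convex_on {0..} G" and G0: "G 0 = 0"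
    and I: "finite I" and w: "\<And>i. i \<in> I \<Longrightarrow> 0 < w i" "(\<Sum>i\<in>I. w i) = 1"
    and D: "\<And>i. i \<in> I \<Longrightarrow> 0 \<le> D i"
    and "0 \<le> \<beta>" and \<beta>: "ereal \<beta> \<le> (\<Sum>i\<in>I. ereal (w i) * D i)"
  shows "ereal (G \<beta>) \<le> (\<Sum>i\<in>I. ereal (w i) * G_ext G (D i))"
proof (cases "\<exists>i\<in>I. D i = \<infinity>")
  case True
  then obtain j where j: "j \<in> I" "D j = \<infinity>"
    by blast
  have "w j \<le> (\<Sum>i\<in>I. w i)"
    using j I w(1) by (intro member_le_sum) (auto intro: less_imp_le)
  then have "w j \<le> 1"
    using w(2) by simp
  moreover have "0 < w j"
    using w j by simp
  ultimately have "G \<beta> \<le> w j * G (\<beta> / w j)"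
    using convex_on_mult_le[OF G_convex G0, of "\<beta> / w j" "w j"] \<open>0 \<le> \<beta>\<close> by simp
  also have "ereal (w j * G (\<beta> / w j)) \<le> ereal (w j) * G_ext G (D j)"
    using G_le_G_ext_infinity[of "\<beta> / w j" G] \<open>0 < w j\<close> \<open>0 \<le> \<beta>\<close> j(2)
    by (simp add: ereal_mult_left_mono flip: times_ereal.simps(1))
  also have "\<dots> \<le> (\<Sum>i\<in>I. ereal (w i) * G_ext G (D i))"
    unfolding sum.remove[OF I j(1)]
  proof (intro add_increasing2 sum_nonneg order_refl)
    fix i assume "i \<in> I - {j}"
    then show "0 \<le> ereal (w i) * G_ext G (D i)"
      using w D G_ext_nonneg[OF G_mono G0, of "D i"] by (simp add: less_imp_le)
  qed
  finally show ?thesis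
    by simp
next
  case False
  define d where "d i = real_of_ereal (D i)" for i
  have d: "D i = ereal (d i)" "0 \<le> d i" if "i \<in> I" for i
    using False D[OF that] that by (cases "D i"; auto simp: d_def)+
  have "I \<noteq> {}"
    using w(2) by auto
  have "G \<beta> \<le> G (\<Sum>i\<in>I. w i * d i)"
    using \<beta> d \<open>0 \<le> \<beta>\<close> by (intro mono_onD[OF G_mono]) auto
  also have "\<dots> \<le> (\<Sum>i\<in>I. w i * G (d i))"
    using convex_on_sum[OF I \<open>I \<noteq> {}\<close> G_convex w(2), of d] w d by (auto simp: less_imp_le)
  finally show ?thesis
    using d by simp
qed

lemma sum_off_diagonal:
  fixes g :: "'a \<Rightarrow> 'a \<Rightarrow> 'b::ab_group_add"
  assumes "finite A"
  shows "(\<Sum>m\<in>A. \<Sum>y\<in>A - {m}. g m y) = (\<Sum>m\<in>A. \<Sum>y\<in>A. g m y) - (\<Sum>m\<in>A. g m m)"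
  using assms by (simp add: sum_diff1 sum_subtractf)

theorem lemma4:
  fixes f G :: "real \<Rightarrow> real" and p :: "'m::finite \<Rightarrow> 'm \<Rightarrow> real" and \<epsilon> :: real
  assumes f_convex: "convex_on {0..} f" and f1: "f 1 = 0"
    and G_mono: "mono_on {0..} G" and G_convex: "convex_on {0..} G" and G0: "G 0 = 0"
    and card2: "CARD('m) \<ge> 2"
    and p_nonneg: "\<And>m mh. 0 \<le> p m mh"
    and p_sum: "(\<Sum>m\<in>UNIV. \<Sum>mh\<in>UNIV. p m mh) = 1"
    and p_unif: "\<And>m. marg1 p m = 1 / real CARD('m)"
    and p_err: "(\<Sum>m\<in>UNIV. \<Sum>mh\<in>UNIV - {m}. p m mh) = \<epsilon>"
  shows "I_Gf G f p \<ge>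
    ereal (G (1 / real CARD('m) * f (real CARD('m) * (1 - \<epsilon>))
            + (real CARD('m) - 1) / real CARD('m) * f (real CARD('m) * \<epsilon> / (real CARD('m) - 1))))"
proof -
  define n where "n = real CARD('m)"
  define \<beta> where "\<beta> = 1 / n * f (n * (1 - \<epsilon>)) + (n - 1) / n * f (n * \<epsilon> / (n - 1))"
  have n: "2 \<le> n"
    using card2 by (simp add: n_def)
  have diag: "(\<Sum>m\<in>UNIV. p m m) = 1 - \<epsilon>"
    using sum_off_diagonal[of UNIV p] p_err p_sum by simp
  have \<epsilon>: "0 \<le> \<epsilon>" "\<epsilon> \<le> 1"
    using diag sum_nonneg[of UNIV "\<lambda>m. p m m"] p_nonneg
    unfolding p_err[symmetric] by (auto intro: sum_nonneg)
  have \<beta>_fdiv: "ereal \<beta> = fdiv_term f (1 - \<epsilon>) (1 / n) + fdiv_term f \<epsilon> ((n - 1) / n)"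
    using n by (simp add: \<beta>_def mult.commute)
  have "fdiv_term f ((1 - \<epsilon>) + \<epsilon>) (1 / n + (n - 1) / n) \<le> ereal \<beta>"
    unfolding \<beta>_fdiv using \<epsilon> n by (intro fdiv_term_add_le[OF f_convex]) auto
  then have "0 \<le> \<beta>"
    using n f1 by (simp add: add_divide_distrib[symmetric])
  have "ereal (G \<beta>) \<le> (\<Sum>m\<in>UNIV. ereal (marg1 p m) * G_ext G (f_div f (cond_dist p m) q))"
    if q: "q \<in> prob_dists" for q
  proof -
    have q_nonneg: "\<And>y. 0 \<le> q y" and q_sum: "(\<Sum>y\<in>UNIV. q y) = 1"
      using q by (auto simp: prob_dists_def)
    have q_all: "(\<Sum>m\<in>UNIV. \<Sum>y\<in>UNIV. marg1 p m * q y) = 1"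
      using q_sum n by (simp add: p_unif n_def flip: sum_divide_distrib)
    have q_diag: "(\<Sum>m\<in>UNIV. marg1 p m * q m) = 1 / n"
      using q_sum by (simp add: p_unif n_def flip: sum_divide_distrib)
    have q_off: "(\<Sum>m\<in>UNIV. \<Sum>y\<in>UNIV - {m}. marg1 p m * q y) = (n - 1) / n"
      using sum_off_diagonal[of UNIV "\<lambda>m y. marg1 p m * q y"] q_all q_diag n
      by (simp add: diff_divide_distrib)
    have "ereal \<beta> \<le> (\<Sum>m\<in>UNIV. ereal (marg1 p m) * f_div f (cond_dist p m) q)"
      using fdiv_term_error_event_le[OF f_convex, of p q] p_nonneg q_nonneg
      by (simp add: diag p_err q_diag q_off \<beta>_fdiv)
    moreover have "0 \<le> f_div f (cond_dist p m) q" for m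
      using n q by (intro f_div_nonneg[OF f_convex f1] cond_dist_in_prob_dists p_nonneg)
        (auto simp: p_unif n_def)
    ultimately show ?thesis
      using n \<open>0 \<le> \<beta>\<close> by (intro G_le_sum_G_ext[OF G_mono G_convex G0]) (auto simp: p_unif n_def)
  qed
  then show ?thesis
    unfolding I_Gf_def by (auto intro: INF_greatest simp: \<beta>_def n_def)
qed

end
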